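(* For every positive integer $n$, there exists a top-balanced permutation sequence of length $n$; that is, there exist bijections $\pi_1,\ldots,\pi_n : N \to [n]$ such that for every day $t \in [n]$ and every player $i \in N$ we have $Z_i^t[1] \le \lceil n/t \rceil$.
   Context: Let $n$ be a positive integer, $N$ a set of $n$ players and $[n]=\{1,\ldots,n\}$ a set of $n$ items, where smaller numbers denote better items. A permutation sequence of length $n$ is an ordered tuple $(\pi_1,\ldots,\pi_n)$ of bijections $\pi_t : N\to[n]$; on day $t$ player $i$ receives item $\pi_t(i)$. For $t\in[n]$ and $i\in N$, $Z_i^t$ denotes the multiset $\{\pi_1(i),\ldots,\pi_t(i)\}$, and for $j\in[t]$, $Z_i^t[j]$ denotes the $j$-th smallest element of $Z_i^t$ (counted with multiplicity), so $Z_i^t[1]$ is the best item $i$ received in the first $t$ days. *)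

theory Defs
  imports Complex_Main "HOL-Library.Multiset"
begin

definition perm_seq :: "'a set \<Rightarrow> nat \<Rightarrow> (nat \<Rightarrow> 'a \<Rightarrow> nat) \<Rightarrow> bool" where
  "perm_seq N n \<sigma> \<longleftrightarrow> (\<forall>t\<in>{1..n}. bij_betw (\<sigma> t) N {1..n})"

definition Z :: "(nat \<Rightarrow> 'a \<Rightarrow> nat) \<Rightarrow> 'a \<Rightarrow> nat \<Rightarrow> nat multiset" where
  "Z \<sigma> i t = image_mset (\<lambda>s. \<sigma> s i) (mset_set {1..t})"

text \<open>Z_i^t[j]: the j-th smallest element (1-indexed, with multiplicity).\<close>
definition Z_nth :: "(nat \<Rightarrow> 'a \<Rightarrow> nat) \<Rightarrow> 'a \<Rightarrow> nat \<Rightarrow> nat \<Rightarrow> nat" where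
  "Z_nth \<sigma> i t j = sorted_list_of_multiset (Z \<sigma> i t) ! (j - 1)"

definition top_balanced :: "'a set \<Rightarrow> nat \<Rightarrow> (nat \<Rightarrow> 'a \<Rightarrow> nat) \<Rightarrow> bool" where
  "top_balanced N n \<sigma> \<longleftrightarrow> perm_seq N n \<sigma> \<and>
     (\<forall>t\<in>{1..n}. \<forall>i\<in>N. Z_nth \<sigma> i t 1 \<le> nat \<lceil>real n / real t\<rceil>)"

end

theory Submission imports Defs begin

text \<open>Greedy construction: on each day, rank the players by their best item so far, worst
  first, and hand out the items in that order. After \<open>t\<close> days, for every \<open>v\<close> at least
  \<open>min n (v * t)\<close> players have received an item \<open>\<le> v\<close>. Indeed, on the next day either the
  \<open>v\<close> players receiving an item \<open>\<le> v\<close> are all new, which adds \<open>v\<close> to the count, or one of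
  them already had such an item, and then so has every player ranked after him. Taking
  \<open>v = \<lceil>n / t\<rceil>\<close> makes the count \<open>n\<close>.\<close>

lemma ex_bij_betw_sorted_rank:
  fixes f :: "'a \<Rightarrow> 'b::linorder"
  assumes "finite S"
  shows "\<exists>p. bij_betw p S {1..card S} \<and> (\<forall>x\<in>S. \<forall>y\<in>S. p x < p y \<longrightarrow> f x \<le> f y)"
  using assms
proof (induction rule: finite_ranking_induct[where f = f])
  case empty
  show ?case by (simp add: bij_betw_def)
next
  case (insert x S)
  show ?case
  proof (cases "x \<in> S")
    case True
    with insert.IH show ?thesis by (simp add: insert_absorb)
  next
    case False
    obtain p where p: "bij_betw p S {1..card S}"
      and mono: "\<forall>a\<in>S. \<forall>b\<in>S. p a < p b \<longrightarrow> f a \<le> f b"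
      using insert.IH by blast
    define q where "q = p(x := Suc (card S))"
    have "bij_betw q S {1..card S}"
      using p by (rule bij_betw_cong[THEN iffD1, rotated]) (use False in \<open>auto simp: q_def\<close>)
    then have "bij_betw q (S \<union> {x}) ({1..card S} \<union> {q x})"
      using False by (intro notIn_Un_bij_betw) (auto simp: q_def)
    moreover have "{1..card S} \<union> {q x} = {1..card (insert x S)}"
      using False insert.hyps(1) by (auto simp: q_def)
    moreover have "f a \<le> f b" if ab: "a \<in> insert x S" "b \<in> insert x S" "q a < q b" for a b
    proof -
      have q_S: "q y \<le> card S" if "y \<in> S" for y
        using that p False by (auto simp: q_def bij_betw_def)
      consider "b = x" | "a = x" "b \<in> S" | "a \<in> S" "b \<in> S"
        using ab by blast
      then show ?thesis
      proof cases
        case 1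
        then show ?thesis using ab(1) insert.hyps(2) by auto
      next
        case 2
        then show ?thesis using ab(3) q_S[of b] by (simp add: q_def)
      next
        case 3
        then show ?thesis using ab(3) mono False by (auto simp: q_def split: if_splits)
      qed
    qed
    ultimately show ?thesis by auto
  qed
qed

lemma card_rank_le:
  assumes "bij_betw p N {1..n}"
  shows "card {i\<in>N. p i \<le> v} = min n v"
proof -
  have "p ` {i\<in>N. p i \<le> v} = {k \<in> p ` N. k \<le> v}" by auto
  also have "\<dots> = {1..min n v}"
    using assms by (auto simp: bij_betw_def)
  finally have "bij_betw p {i\<in>N. p i \<le> v} {1..min n v}"
    using assms by (intro bij_betw_subset[OF assms]) auto
  then show ?thesis by (simp add: bij_betw_same_card)
qed

definition best_item :: "(nat \<Rightarrow> 'a \<Rightarrow> nat) \<Rightarrow> nat \<Rightarrow> 'a \<Rightarrow> nat" where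
  "best_item \<sigma> t i = Min ((\<lambda>s. \<sigma> s i) ` {1..t})"

definition reached :: "'a set \<Rightarrow> (nat \<Rightarrow> 'a \<Rightarrow> nat) \<Rightarrow> nat \<Rightarrow> nat \<Rightarrow> 'a set" where
  "reached N \<sigma> t v = {i\<in>N. \<exists>s\<in>{1..t}. \<sigma> s i \<le> v}"

lemma reached_subset: "reached N \<sigma> t v \<subseteq> N"
  by (auto simp: reached_def)

lemma reached_iff_best_item:
  assumes "1 \<le> t"
  shows "i \<in> reached N \<sigma> t v \<longleftrightarrow> i \<in> N \<and> best_item \<sigma> t i \<le> v"
  using assms by (auto simp: reached_def best_item_def Min_le_iff)

lemma reached_fun_upd_future:
  assumes "t < u"
  shows "reached N (\<sigma>(u := p)) t v = reached N \<sigma> t v"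
  using assms by (auto simp: reached_def)

lemma reached_Suc_fun_upd:
  "reached N (\<sigma>(Suc t := p)) (Suc t) v = reached N \<sigma> t v \<union> {i\<in>N. p i \<le> v}"
proof -
  have "{1..Suc t} = insert (Suc t) {1..t}" by auto
  then show ?thesis unfolding reached_def by auto
qed

lemma card_reached_greedy_step:
  assumes "finite N" and "card N = n" and p: "bij_betw p N {1..n}"
    and rank: "\<forall>x\<in>N. \<forall>y\<in>N. p x < p y \<longrightarrow> best_item \<sigma> t y \<le> best_item \<sigma> t x"
  shows "min n (card (reached N \<sigma> t v) + v) \<le> card (reached N (\<sigma>(Suc t := p)) (Suc t) v)"
proof (cases "reached N \<sigma> t v \<inter> {i\<in>N. p i \<le> v} = {}")
  case True
  have "finite (reached N \<sigma> t v)" using reached_subset \<open>finite N\<close> by (rule finite_subset)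
  then have "card (reached N \<sigma> t v \<union> {i\<in>N. p i \<le> v}) = card (reached N \<sigma> t v) + min n v"
    using True \<open>finite N\<close> by (simp add: card_Un_disjoint card_rank_le[OF p, symmetric])
  then show ?thesis by (simp add: reached_Suc_fun_upd)
next
  case False
  then obtain x where x: "x \<in> reached N \<sigma> t v" "p x \<le> v" by blast
  have "x \<in> N" using reached_subset x(1) by (rule subsetD)
  have "1 \<le> t" using x(1) by (auto simp: reached_def)
  note reached_iff = reached_iff_best_item[OF \<open>1 \<le> t\<close>]
  have best_x: "best_item \<sigma> t x \<le> v" using x(1) by (simp add: reached_iff)
  have "N \<subseteq> reached N \<sigma> t v \<union> {i\<in>N. p i \<le> v}"
  proof
    fix y assume "y \<in> N"
    show "y \<in> reached N \<sigma> t v \<union> {i\<in>N. p i \<le> v}"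
    proof (cases "p y \<le> v")
      case False
      then have "p x < p y" using x(2) by linarith
      then have "best_item \<sigma> t y \<le> best_item \<sigma> t x" using rank \<open>x \<in> N\<close> \<open>y \<in> N\<close> by blast
      then show ?thesis using best_x \<open>y \<in> N\<close> by (simp add: reached_iff)
    qed (use \<open>y \<in> N\<close> in simp)
  qed
  moreover have "reached N \<sigma> t v \<union> {i\<in>N. p i \<le> v} \<subseteq> N"
    using reached_subset[of N \<sigma> t v] by blast
  ultimately have "reached N (\<sigma>(Suc t := p)) (Suc t) v = N"
    unfolding reached_Suc_fun_upd by (rule subset_antisym[rotated])
  then show ?thesis using \<open>card N = n\<close> by simp
qed

lemma ex_greedy_prefix:
  assumes "finite N" and "card N = n"
  shows "\<exists>\<sigma>. (\<forall>t\<in>{1..T}. bij_betw (\<sigma> t) N {1..n}) \<and>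
    (\<forall>t\<le>T. \<forall>v. min n (v * t) \<le> card (reached N \<sigma> t v))"
proof (induction T)
  case 0
  show ?case by simp
next
  case (Suc T)
  then obtain \<sigma> where bij: "\<forall>t\<in>{1..T}. bij_betw (\<sigma> t) N {1..n}"
    and count: "\<forall>t\<le>T. \<forall>v. min n (v * t) \<le> card (reached N \<sigma> t v)" by blast
  obtain p where p: "bij_betw p N {1..n}"
    and rank: "\<forall>x\<in>N. \<forall>y\<in>N. p x < p y \<longrightarrow> best_item \<sigma> T y \<le> best_item \<sigma> T x"
    using ex_bij_betw_sorted_rank[OF \<open>finite N\<close>, of "\<lambda>i. - int (best_item \<sigma> T i)"]
      \<open>card N = n\<close> by auto
  define \<sigma>' where "\<sigma>' = \<sigma>(Suc T := p)"
  have "min n (v * t) \<le> card (reached N \<sigma>' t v)" if "t \<le> Suc T" for t v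
  proof (cases "t = Suc T")
    case True
    have "min n (v * T) \<le> card (reached N \<sigma> T v)" using count by blast
    then have "min n (v * Suc T) \<le> min n (card (reached N \<sigma> T v) + v)" by auto
    also have "\<dots> \<le> card (reached N \<sigma>' (Suc T) v)"
      unfolding \<sigma>'_def using assms p rank by (rule card_reached_greedy_step)
    finally show ?thesis using True by simp
  next
    case False
    then show ?thesis
      using that count by (simp add: \<sigma>'_def reached_fun_upd_future)
  qed
  moreover have "\<forall>t\<in>{1..Suc T}. bij_betw (\<sigma>' t) N {1..n}"
    using bij p by (auto simp: \<sigma>'_def le_Suc_eq)
  ultimately show ?case by blast
qed

lemma Z_nth_1_le:
  assumes "s \<in> {1..t}" and "\<sigma> s i \<le> v"
  shows "Z_nth \<sigma> i t 1 \<le> v"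
proof -
  let ?xs = "sorted_list_of_multiset (Z \<sigma> i t)"
  have "\<sigma> s i \<in> set ?xs" using assms(1) by (simp add: Z_def)
  moreover have "sorted ?xs" by simp
  ultimately have "?xs ! 0 \<le> \<sigma> s i" by (cases ?xs) auto
  then show ?thesis using assms(2) by (simp add: Z_nth_def)
qed

lemma le_nat_ceiling_div_mult:
  assumes "1 \<le> t"
  shows "n \<le> nat \<lceil>real n / real t\<rceil> * t"
proof -
  have "real n / real t \<le> real_of_int \<lceil>real n / real t\<rceil>"
    by (rule le_of_int_ceiling)
  moreover have "0 < real t" using assms by simp
  ultimately have "real n \<le> real_of_int \<lceil>real n / real t\<rceil> * real t"
    using pos_divide_le_eq by blast
  then have "real n \<le> real (nat \<lceil>real n / real t\<rceil> * t)" by simp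
  then show ?thesis by linarith
qed

lemma top_balanced_if_reached:
  assumes "perm_seq N n \<sigma>"
    and "\<forall>t\<in>{1..n}. reached N \<sigma> t (nat \<lceil>real n / real t\<rceil>) = N"
  shows "top_balanced N n \<sigma>"
proof -
  have "Z_nth \<sigma> i t 1 \<le> nat \<lceil>real n / real t\<rceil>" if "t \<in> {1..n}" and "i \<in> N" for t i
  proof -
    have "i \<in> reached N \<sigma> t (nat \<lceil>real n / real t\<rceil>)" using assms(2) that by blast
    then obtain s where "s \<in> {1..t}" "\<sigma> s i \<le> nat \<lceil>real n / real t\<rceil>"
      unfolding reached_def by blast
    then show ?thesis by (rule Z_nth_1_le)
  qed
  with assms(1) show ?thesis by (simp add: top_balanced_def)
qed

theorem mainTheorem1:
  fixes N :: "'a set" and n :: nat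
  assumes "finite N" and "card N = n" and "n \<ge> 1"
  shows "\<exists>\<sigma> :: nat \<Rightarrow> 'a \<Rightarrow> nat. top_balanced N n \<sigma>"
proof -
  obtain \<sigma> :: "nat \<Rightarrow> 'a \<Rightarrow> nat" where bij: "\<forall>t\<in>{1..n}. bij_betw (\<sigma> t) N {1..n}"
    and count: "\<forall>t\<le>n. \<forall>v. min n (v * t) \<le> card (reached N \<sigma> t v)"
    using ex_greedy_prefix[OF assms(1,2)] by blast
  have "reached N \<sigma> t (nat \<lceil>real n / real t\<rceil>) = N" if t: "t \<in> {1..n}" for t
  proof (rule card_seteq[OF assms(1) reached_subset])
    let ?v = "nat \<lceil>real n / real t\<rceil>"
    have "min n (?v * t) \<le> card (reached N \<sigma> t ?v)" using count t by simp
    moreover have "n \<le> ?v * t" using t by (simp add: le_nat_ceiling_div_mult)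
    ultimately show "card N \<le> card (reached N \<sigma> t ?v)" using assms(2) by simp
  qed
  then have "top_balanced N n \<sigma>"
    using bij by (simp add: top_balanced_if_reached perm_seq_def)
  then show ?thesis by (rule exI[of _ \<sigma>])
qed

end
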